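(* Let $m,n,d,e$ be positive integers with $m=2n$ and $e=\gcd(n,d)=\gcd(m,d)$, and let $s\ge i\ge1$ be integers. Then \[|V_{s,i}|=2^{mi}\sum_{u=0}^{i}\binom{i}{u}_{2^e}2^{eu(u+1)/2}\prod_{j=0}^{u-1}(1-2^{ej-m}).\]
   Context: For integers $s\ge0$ and $i\ge1$, $V_{s,i}$ denotes the set of solutions $(x_1,\dots,x_{2i})\in\mathbb{F}_{2^m}^{2i}$ of the system \[\sum_{l=1}^i\big(x_{2l-1}x_{2l}^{2^{(\frac{n}{e}-j)d}}+x_{2l-1}^{2^{(\frac{n}{e}-j)d}}x_{2l}\big)=0,\qquad j=0,1,\dots,s.\] $\binom{a}{b}_q$ is the Gaussian binomial coefficient. *)

theory Defs
  imports Complex_Main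
begin

definition gauss_binom :: "real \<Rightarrow> nat \<Rightarrow> nat \<Rightarrow> real" where
  "gauss_binom q a b =
     (if b \<le> a then (\<Prod>j<b. (q ^ (a - j) - 1)) / (\<Prod>j<b. (q ^ (j + 1) - 1)) else 0)"

text \<open>Power of the Frobenius with an integer exponent t on a field of order 2^m:
  x \<mapsto> x^(2^t), where t is reduced modulo m (the Frobenius x \<mapsto> x^2 has order m,
  so this is the usual meaning also for negative t).\<close>
definition frob :: "nat \<Rightarrow> int \<Rightarrow> 'a::field \<Rightarrow> 'a" where
  "frob m t x = x ^ (2 ^ nat (t mod int m))"

text \<open>V_{s,i}: tuples (x_1,...,x_{2i}) represented as lists of length 2i
  (x_k = xs ! (k-1)).\<close>
definition V_set :: "nat \<Rightarrow> nat \<Rightarrow> nat \<Rightarrow> nat \<Rightarrow> nat \<Rightarrow> nat \<Rightarrow> 'a::field list set" where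
  "V_set m n d e s i =
    {xs. length xs = 2 * i \<and>
       (\<forall>j\<in>{0..s}.
          (\<Sum>l\<in>{1..i}.
             xs ! (2*l - 2) * frob m ((int (n div e) - int j) * int d) (xs ! (2*l - 1))
           + frob m ((int (n div e) - int j) * int d) (xs ! (2*l - 2)) * xs ! (2*l - 1)) = 0)}"

end

(*
  Write sigma for the automorphism x |-> x ^ 2 ^ d of F = GF(2^m); its fixed field is K = GF(2^e).
  Split a tuple of V_{s,i} into its odd- and even-indexed entries x, y in F^i and put
  B_a(x, y) = sum_l x_l sigma^a(y_l) + sigma^a(x_l) y_l.  Since sigma^(2n/e) = id and
  B_(-a) = sigma^(-a) o B_a, the s + 1 defining equations say that B_a(x, y) = 0 for the
  2s + 1 >= 2i consecutive exponents a in [n/e - s, n/e + s].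

  For fixed x this is an affine condition on y, and its number of solutions depends only on the
  K-rank r of x: it is 2^(m(i - r)) 2^(e r(r+1)/2).  Indeed, prepending an entry w to x multiplies
  the count by the number of admissible first entries z of y.  This is all of F if w lies in the
  K-span of x; otherwise it is exactly the K-span of w # x, by a Moore-determinant argument: the
  conjugates sigma^a of K-independent elements are F-independent over any window of as many
  consecutive exponents as there are elements.  Finally there are
  gauss_binom q i r * prod_{j<r} (2^m - q^j) tuples x of K-rank r (q = 2^e), and summing over r
  gives the formula.
*)

theory Submission
  imports Defs "HOL-Number_Theory.Residues" "HOL-Computational_Algebra.Polynomial"
begin

lemma CHAR_eq_2_if_card_eq_power_2:
  assumes "card (UNIV :: 'a::{field,finite} set) = 2 ^ m" "m > 0"
  shows "CHAR('a) = 2"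
proof -
  have prime: "prime CHAR('a)"
    by (intro prime_CHAR_semidom finite_imp_CHAR_pos) simp
  moreover have "CHAR('a) dvd 2 ^ m"
    using CHAR_dvd_CARD[where 'a = 'a] assms(1) by simp
  ultimately have "CHAR('a) dvd 2"
    using prime_dvd_power by blast
  with prime show ?thesis
    using primes_dvd_imp_eq two_is_prime_nat by blast
qed

lemma power_card_UNIV_eq_self:
  fixes x :: "'a::{field,finite}"
  shows "x ^ card (UNIV :: 'a set) = x"
proof (cases "x = 0")
  case False
  define U where "U = UNIV - {0 :: 'a}"
  have "(\<Prod>y\<in>U. x * y) = (\<Prod>y\<in>U. y)"
    unfolding U_def by (rule prod.reindex_bij_witness[of _ "\<lambda>y. y / x" "\<lambda>y. x * y"]) (use False in auto)
  then have "x ^ card U = 1"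
    by (simp add: prod.distrib U_def)
  moreover have "card (UNIV :: 'a set) = Suc (card U)"
    unfolding U_def by (rule card_Suc_Diff1[symmetric]) simp_all
  ultimately show ?thesis
    by simp
qed (simp add: finite_UNIV_card_ge_0)

lemma add_self_CHAR_2:
  assumes "CHAR('a::ring_1) = 2"
  shows "(x :: 'a) + x = 0"
  using of_nat_CHAR[where 'a = 'a] assms by (simp flip: mult_2)

lemma power_2_power_add_CHAR_2:
  assumes "CHAR('a::comm_semiring_1) = 2"
  shows "(x + y :: 'a) ^ 2 ^ j = x ^ 2 ^ j + y ^ 2 ^ j"
  using assms by (intro freshmans_dream') simp_all

lemma power_2_power_inj_CHAR_2:
  assumes "CHAR('a::field) = 2" and "(x :: 'a) ^ 2 ^ j = y ^ 2 ^ j"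
  shows "x = y"
proof -
  have "(x - y) ^ 2 ^ j = x ^ 2 ^ j + y ^ 2 ^ j"
    using assms(1) by (simp only: minus_CHAR_2 power_2_power_add_CHAR_2)
  also have "\<dots> = 0"
    using assms by (simp add: add_self_CHAR_2)
  finally show ?thesis
    by simp
qed

lemma power_2_power_mult_eq_self:
  assumes "(z :: 'a::monoid_mult) ^ 2 ^ e = z"
  shows "z ^ 2 ^ (e * c) = z"
proof (induction c)
  case (Suc c)
  have "z ^ 2 ^ (e * Suc c) = (z ^ 2 ^ (e * c)) ^ 2 ^ e"
    by (simp add: power_mult[symmetric] power_add algebra_simps)
  then show ?case
    using Suc assms by simp
qed simp

lemma power_2_power_gcd_eq_self:
  assumes "CHAR('a::field) = 2" and "(z :: 'a) ^ 2 ^ a = z" "z ^ 2 ^ b = z"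
  shows "z ^ 2 ^ gcd a b = z"
proof (cases "a = 0")
  case False
  obtain u v where uv: "a * u = b * v + gcd a b"
    using bezout_nat[OF False] by blast
  have "(z ^ 2 ^ gcd a b) ^ 2 ^ (b * v) = z ^ 2 ^ (a * u)"
    by (simp add: uv power_mult[symmetric] power_add mult.commute)
  also have "\<dots> = z ^ 2 ^ (b * v)"
    using assms by (simp add: power_2_power_mult_eq_self)
  finally show ?thesis
    using assms(3) by (metis power_2_power_inj_CHAR_2[OF assms(1)])
qed (use assms in simp)

lemma power_2_power_mod_eq:
  assumes "card (UNIV :: 'a::{field,finite} set) = 2 ^ m"
  shows "(x :: 'a) ^ 2 ^ j = x ^ 2 ^ (j mod m)"
proof -
  have "x ^ 2 ^ j = x ^ 2 ^ (j mod m + m * (j div m))"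
    by simp
  also have "\<dots> = (x ^ 2 ^ (j mod m)) ^ 2 ^ (m * (j div m))"
    by (simp only: power_add power_mult[of x])
  also have "\<dots> = x ^ 2 ^ (j mod m)"
    using power_card_UNIV_eq_self assms by (metis power_2_power_mult_eq_self)
  finally show ?thesis .
qed

lemma frob_add:
  assumes "CHAR('a::field) = 2"
  shows "frob m t (x + y :: 'a) = frob m t x + frob m t y"
  unfolding frob_def using assms by (rule power_2_power_add_CHAR_2)

lemma frob_mult: "frob m t (x * y :: 'a::field) = frob m t x * frob m t y"
  unfolding frob_def by (simp add: power_mult_distrib)

lemma frob_sum:
  assumes "CHAR('a::field) = 2"
  shows "frob m t (\<Sum>i\<in>A. f i :: 'a) = (\<Sum>i\<in>A. frob m t (f i))"
  unfolding frob_def using assms by (intro freshmans_dream_sum') simp_all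

lemma frob_eq_0_iff [simp]: "frob m t (x :: 'a::field) = 0 \<longleftrightarrow> x = 0"
  unfolding frob_def by simp

lemma frob_of_nat: "frob m (int j) x = x ^ 2 ^ (j mod m)"
  unfolding frob_def by (simp flip: of_nat_mod)

lemma frob_cong: "t mod int m = t' mod int m \<Longrightarrow> frob m t x = frob m t' x"
  unfolding frob_def by simp

lemma frob_frob:
  assumes "card (UNIV :: 'a::{field,finite} set) = 2 ^ m" "m > 0"
  shows "frob m t (frob m t' x) = frob m (t + t') (x :: 'a)"
proof -
  define a b where "a = nat (t mod int m)" and "b = nat (t' mod int m)"
  have "int ((a + b) mod m) = (t + t') mod int m"
    using assms(2) by (simp add: a_def b_def of_nat_mod mod_add_eq)
  then have "frob m (t + t') x = x ^ 2 ^ ((a + b) mod m)"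
    unfolding frob_def by (metis nat_int)
  also have "\<dots> = (x ^ 2 ^ b) ^ 2 ^ a"
    using power_2_power_mod_eq[OF assms(1)] by (simp add: power_mult[symmetric] power_add mult.commute)
  finally show ?thesis
    unfolding frob_def a_def b_def by simp
qed

definition fixed_field :: "nat \<Rightarrow> 'a::field set" where
  "fixed_field e = {z. z ^ 2 ^ e = z}"

lemma frob_fixed_field:
  assumes "z \<in> fixed_field e" "e dvd m" "int e dvd t" "m > 0"
  shows "frob m t z = z"
proof -
  have "int e dvd t mod int m"
    using assms by (simp add: dvd_mod)
  then obtain c where "nat (t mod int m) = e * c"
    using assms(4) by (metis dvd_def int_dvd_int_iff int_nat_eq of_nat_0_less_iff pos_mod_sign)
  then show ?thesis
    using assms(1) unfolding frob_def fixed_field_def by (simp add: power_2_power_mult_eq_self)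
qed

lemma mem_fixed_field_if_frob_fixed:
  assumes "CHAR('a::{field,finite}) = 2" "card (UNIV :: 'a set) = 2 ^ m"
    and "gcd m d = e" and "frob m (int d) z = (z :: 'a)"
  shows "z \<in> fixed_field e"
proof -
  have "z ^ 2 ^ gcd (d mod m) m = z"
    using assms power_card_UNIV_eq_self[of z]
    by (intro power_2_power_gcd_eq_self) (simp_all add: frob_of_nat)
  moreover have "gcd (d mod m) m = e"
    using assms(3) by (metis gcd.commute gcd_red_nat)
  ultimately show ?thesis
    by (simp add: fixed_field_def)
qed

definition is_subfield :: "'a::field set \<Rightarrow> bool" where
  "is_subfield K \<longleftrightarrow> 0 \<in> K \<and> 1 \<in> K \<and> (\<forall>x\<in>K. \<forall>y\<in>K. x + y \<in> K \<and> x * y \<in> K)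
     \<and> (\<forall>x\<in>K. - x \<in> K \<and> inverse x \<in> K)"

lemma is_subfield_fixed_field:
  assumes "CHAR('a::field) = 2"
  shows "is_subfield (fixed_field e :: 'a set)"
  using assms unfolding is_subfield_def fixed_field_def
  by (auto simp: power_2_power_add_CHAR_2 power_mult_distrib power_inverse uminus_CHAR_2)

lemma card_fixed_field_le:
  assumes "e > 0"
  shows "card (fixed_field e :: 'a::field set) \<le> 2 ^ e"
proof -
  let ?p = "monom (1 :: 'a) (2 ^ e) - monom 1 1"
  have "(1 :: nat) < 2 ^ e"
    using power_increasing[of 1 e "2 :: nat"] assms by simp
  then have "coeff ?p (2 ^ e) = 1"
    by simp
  then have "?p \<noteq> 0"
    by (metis coeff_0 zero_neq_one)
  moreover have "degree ?p \<le> 2 ^ e"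
    by (intro degree_diff_le) (auto intro: order.trans[OF degree_monom_le])
  moreover have "fixed_field e = {z. poly ?p z = 0}"
    by (auto simp: fixed_field_def poly_monom)
  ultimately show ?thesis
    using card_poly_roots_bound[of ?p] by simp
qed

lemma card_UNIV_le_card_range_mult_card_kernel:
  fixes f :: "'a::{ab_group_add,finite} \<Rightarrow> 'b::ab_group_add"
  assumes "\<And>x y. f (x + y) = f x + f y"
  shows "card (UNIV :: 'a set) \<le> card (range f) * card {z. f z = 0}"
proof -
  have fibre: "card {z. f z = v} \<le> card {z. f z = 0}" if v: "v \<in> range f" for v
  proof -
    obtain z0 where z0: "v = f z0"
      using v by blast
    have "f (z - z0) = f z - f z0" for z
      using assms[of "z - z0" z0] by simp
    then have "z \<in> (\<lambda>k. k + z0) ` {z. f z = 0}" if "f z = v" for z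
      using z0 that by (intro image_eqI[of _ _ "z - z0"]) simp_all
    then have "{z. f z = v} \<subseteq> (\<lambda>k. k + z0) ` {z. f z = 0}"
      by blast
    then have "card {z. f z = v} \<le> card ((\<lambda>k. k + z0) ` {z. f z = 0})"
      by (intro card_mono) simp_all
    also have "\<dots> \<le> card {z. f z = 0}"
      by (rule card_image_le) simp
    finally show ?thesis .
  qed
  have "card (UNIV :: 'a set) = card (\<Union>v\<in>range f. {z. f z = v})"
    by (rule arg_cong[of _ _ card]) auto
  also have "\<dots> \<le> (\<Sum>v\<in>range f. card {z. f z = v})"
    by (rule card_UN_le) simp
  also have "\<dots> \<le> (\<Sum>v\<in>range f. card {z. f z = 0})"
    by (rule sum_mono) (rule fibre)
  finally show ?thesis
    by simp
qed

lemma card_trace_kernel_le: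
  assumes "e > 0" "N > 0"
  shows "card {z :: 'a::field. (\<Sum>j<N. z ^ 2 ^ (e * j)) = 0} \<le> 2 ^ (e * (N - 1))"
proof -
  let ?p = "\<Sum>j<N. monom (1 :: 'a) (2 ^ (e * j))"
  have "coeff ?p (2 ^ (e * (N - 1))) = (\<Sum>j<N. if j = N - 1 then 1 else 0)"
    unfolding coeff_sum using assms by (intro sum.cong) auto
  also have "\<dots> = 1"
    using assms by simp
  finally have "?p \<noteq> 0"
    by (metis coeff_0 zero_neq_one)
  moreover have "degree ?p \<le> 2 ^ (e * (N - 1))"
  proof (rule degree_sum_le)
    fix j assume "j \<in> {..<N}"
    then have "2 ^ (e * j) \<le> (2 :: nat) ^ (e * (N - 1))"
      by (intro power_increasing) auto
    then show "degree (monom (1 :: 'a) (2 ^ (e * j))) \<le> 2 ^ (e * (N - 1))"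
      using degree_monom_le order.trans by blast
  qed simp
  moreover have "poly ?p z = (\<Sum>j<N. z ^ 2 ^ (e * j))" for z
    by (simp add: poly_sum poly_monom)
  ultimately show ?thesis
    using card_poly_roots_bound[of ?p] by simp
qed

lemma trace_power_2_power_add_self:
  assumes "CHAR('a::field) = 2" "(z :: 'a) ^ 2 ^ (e * N) = z"
  shows "(\<Sum>j<N. (z ^ 2 ^ e + z) ^ 2 ^ (e * j)) = 0"
proof -
  have "(\<Sum>j<N. (z ^ 2 ^ e + z) ^ 2 ^ (e * j)) = (\<Sum>j<N. z ^ 2 ^ (e * Suc j) - z ^ 2 ^ (e * j))"
    using assms(1)
    by (intro sum.cong) (simp_all add: power_2_power_add_CHAR_2 minus_CHAR_2
        power_mult[symmetric] power_add[symmetric] algebra_simps)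
  also have "\<dots> = z ^ 2 ^ (e * N) - z ^ 2 ^ (e * 0)"
    by (rule sum_lessThan_telescope)
  finally show ?thesis
    using assms(2) by simp
qed

text \<open>Lower bound: \<open>\<psi> z = z ^ 2 ^ e + z\<close> is additive with kernel the fixed field, and its image
  lies in the kernel of the trace \<open>\<Sum>j<N. z ^ 2 ^ (e * j)\<close>, a polynomial of degree \<open>2 ^ (e * (N - 1))\<close>.\<close>
lemma card_fixed_field:
  assumes "CHAR('a::{field,finite}) = 2" "card (UNIV :: 'a set) = 2 ^ m"
    and "e > 0" "e dvd m" "m > 0"
  shows "card (fixed_field e :: 'a set) = 2 ^ e"
proof (rule antisym)
  obtain N where N: "m = e * N"
    using assms(4) by blast
  with assms have "N > 0"
    by (cases N) auto
  define \<psi> where "\<psi> z = z ^ 2 ^ e + z" for z :: 'a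
  define tr where "tr z = (\<Sum>j<N. z ^ 2 ^ (e * j))" for z :: 'a
  have "\<psi> z = 0 \<longleftrightarrow> z \<in> fixed_field e" for z
    using assms(1) add_self_CHAR_2[of "z ^ 2 ^ e"]
    by (auto simp: \<psi>_def fixed_field_def add_eq_0_iff2 uminus_CHAR_2)
  then have kernel: "{z. \<psi> z = 0} = fixed_field e"
    by blast
  have "tr (\<psi> z) = 0" for z
    unfolding tr_def \<psi>_def using assms(1) power_card_UNIV_eq_self[of z] assms(2) N
    by (intro trace_power_2_power_add_self) simp_all
  then have "card (range \<psi>) \<le> card {z. tr z = 0}"
    by (intro card_mono) auto
  also have "\<dots> \<le> 2 ^ (e * (N - 1))"
    unfolding tr_def by (rule card_trace_kernel_le[OF assms(3) \<open>N > 0\<close>])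
  finally have "card (range \<psi>) * card (fixed_field e :: 'a set)
      \<le> 2 ^ (e * (N - 1)) * card (fixed_field e :: 'a set)"
    by (rule mult_right_mono) simp
  moreover have "\<psi> (x + y) = \<psi> x + \<psi> y" for x y
    unfolding \<psi>_def using assms(1) by (simp add: power_2_power_add_CHAR_2 ac_simps)
  then have "2 ^ m \<le> card (range \<psi>) * card (fixed_field e :: 'a set)"
    using card_UNIV_le_card_range_mult_card_kernel[of \<psi>] assms(2) kernel by simp
  moreover have "m = e * (N - 1) + e"
    using N \<open>N > 0\<close> by (cases N) auto
  then have "(2 :: nat) ^ m = 2 ^ (e * (N - 1)) * 2 ^ e"
    by (simp add: power_add)
  ultimately have "2 ^ (e * (N - 1)) * 2 ^ e \<le> 2 ^ (e * (N - 1)) * card (fixed_field e :: 'a set)"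
    by linarith
  then show "2 ^ e \<le> card (fixed_field e :: 'a set)"
    by simp
qed (rule card_fixed_field_le[OF assms(3)])

lemma gauss_binom_0_right [simp]: "gauss_binom q a 0 = 1"
  by (simp add: gauss_binom_def)

lemma gauss_binom_0_left: "gauss_binom q 0 u = (if u = 0 then 1 else 0)"
  by (simp add: gauss_binom_def)

lemma gauss_binom_Suc_Suc:
  assumes "q > 1"
  shows "gauss_binom q (Suc L) (Suc v) = q ^ Suc v * gauss_binom q L (Suc v) + gauss_binom q L v"
proof (cases "v \<le> L")
  case False
  then show ?thesis
    by (simp add: gauss_binom_def)
next
  case True
  define N where "N = (\<Prod>j<v. q ^ (L - j) - 1)"
  define D where "D = (\<Prod>j<v. q ^ (j + 1) - 1)"
  have pos: "q ^ n - 1 \<noteq> 0" if "n > 0" for n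
    using one_less_power[OF assms that] by simp
  then have "D \<noteq> 0"
    unfolding D_def by (simp del: power_Suc)
  have "(\<Prod>j<Suc v. q ^ (Suc L - j) - 1) = (q ^ Suc L - 1) * N"
    unfolding N_def by (simp only: prod.lessThan_Suc_shift) simp
  moreover have "(\<Prod>j<Suc v. q ^ (j + 1) - 1) = D * (q ^ Suc v - 1)"
    unfolding D_def by simp
  ultimately have lhs: "gauss_binom q (Suc L) (Suc v) = (q ^ Suc L - 1) * N / (D * (q ^ Suc v - 1))"
    using True by (simp add: gauss_binom_def)
  have r1: "gauss_binom q L (Suc v) = N * (q ^ (L - v) - 1) / (D * (q ^ Suc v - 1))"
  proof (cases "v = L")
    case True
    then show ?thesis
      by (simp add: gauss_binom_def)
  qed (use True in \<open>simp add: gauss_binom_def N_def D_def\<close>)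
  have r2: "gauss_binom q L v = N / D"
    using True by (simp add: gauss_binom_def N_def D_def)
  have "q ^ Suc v * (N * (q ^ (L - v) - 1) / (D * (q ^ Suc v - 1))) + N / D
      = N * (q ^ Suc v * q ^ (L - v) - q ^ Suc v + (q ^ Suc v - 1)) / (D * (q ^ Suc v - 1))"
    using \<open>D \<noteq> 0\<close> pos[of "Suc v"] by (simp add: field_simps)
  also have "q ^ Suc v * q ^ (L - v) = q ^ Suc L"
    using True by (simp flip: power_add)
  finally have "q ^ Suc v * (N * (q ^ (L - v) - 1) / (D * (q ^ Suc v - 1))) + N / D
      = (q ^ Suc L - 1) * N / (D * (q ^ Suc v - 1))"
    by (simp add: mult.commute)
  then show ?thesis
    using lhs r1 r2 by simp
qed

lemma finite_lists_length_eq_UNIV: "finite {xs :: 'a::finite list. length xs = n}"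
  using finite_lists_length_eq[of "UNIV :: 'a set" n] by simp

lemma card_lists_length_Suc:
  "card {xs :: 'a::finite list. length xs = Suc L \<and> P xs} =
     (\<Sum>x\<in>{x. length x = L}. card {w. P (w # x)})"
proof -
  have img: "{xs. length xs = Suc L \<and> P xs} =
      (\<lambda>(x, w). w # x) ` (SIGMA x:{x. length x = L}. {w. P (w # x)})"
    by (auto simp: length_Suc_conv)
  have "inj_on (\<lambda>(x, w). w # x) (SIGMA x:{x. length x = L}. {w. P (w # x)})"
    by (auto simp: inj_on_def)
  then have "card {xs. length xs = Suc L \<and> P xs} = card (SIGMA x:{x. length x = L}. {w. P (w # x)})"
    unfolding img by (rule card_image)
  also have "\<dots> = (\<Sum>x\<in>{x. length x = L}. card {w. P (w # x)})"
    by (rule card_SigmaI) (simp_all add: finite_lists_length_eq_UNIV)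
  finally show ?thesis .
qed

lemma sum_lists_length_if:
  fixes c :: "'b::comm_semiring_1"
  shows "(\<Sum>x\<in>{x :: 'a::finite list. length x = L}. if P x then c else 0) =
     c * of_nat (card {x :: 'a list. length x = L \<and> P x})"
proof -
  have "(\<Sum>x\<in>{x :: 'a list. length x = L}. if P x then c else 0) =
      (\<Sum>x\<in>{x \<in> {x. length x = L}. P x}. c)"
    by (rule sum.inter_filter[symmetric]) (rule finite_lists_length_eq_UNIV)
  then show ?thesis
    by (simp add: mult.commute)
qed

lemma nth_splice:
  assumes "length x = length y" "l < length x"
  shows "splice x y ! (2 * l) = x ! l \<and> splice x y ! (2 * l + 1) = y ! l"
  using assms
proof (induction x arbitrary: y l)
  case (Cons u x)
  then obtain v y' where "y = v # y'"
    by (cases y) auto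
  with Cons show ?case
    by (cases l) simp_all
qed simp

lemma splice_evens_odds:
  assumes "length xs = 2 * i"
  shows "splice (map (\<lambda>l. xs ! (2 * l)) [0..<i]) (map (\<lambda>l. xs ! (2 * l + 1)) [0..<i]) = xs"
  (is "splice ?x ?y = xs")
proof (rule nth_equalityI)
  show "length (splice ?x ?y) = length xs"
    using assms by simp
  fix p assume "p < length (splice ?x ?y)"
  then have "p div 2 < i"
    by simp
  then show "splice ?x ?y ! p = xs ! p"
    using nth_splice[of ?x ?y "p div 2"] by (cases "even p") (auto elim!: evenE oddE)
qed

lemma inj_on_splice: "inj_on (\<lambda>(x, y). splice x y) {(x, y). length x = length y}"
proof (rule inj_onI, clarify)
  fix x y x' y' :: "'a list"
  assume len: "length x = length y" "length x' = length y'" and eq: "splice x y = splice x' y'"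
  have "length x + length y = length x' + length y'"
    using arg_cong[OF eq, of length] by (simp only: length_splice)
  with len have len': "length x = length x'" "length y = length y'"
    by linarith+
  have "x ! l = x' ! l \<and> y ! l = y' ! l" if "l < length x" for l
    using nth_splice[OF len(1) that] nth_splice[OF len(2), of l] that len' eq by simp
  then show "x = x' \<and> y = y'"
    using len len' by (auto intro: nth_equalityI)
qed

fun span_list :: "'a::field set \<Rightarrow> 'a list \<Rightarrow> 'a set" where
  "span_list K [] = {0}"
| "span_list K (b # B) = {c * b + v |c v. c \<in> K \<and> v \<in> span_list K B}"

fun rank_list :: "'a::field set \<Rightarrow> 'a list \<Rightarrow> nat" where
  "rank_list K [] = 0"
| "rank_list K (b # B) = (if b \<in> span_list K B then rank_list K B else Suc (rank_list K B))"

fun indep_list :: "'a::field set \<Rightarrow> 'a list \<Rightarrow> bool" where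
  "indep_list K [] = True"
| "indep_list K (b # B) \<longleftrightarrow> b \<notin> span_list K B \<and> indep_list K B"

definition indep_family :: "'a::field set \<Rightarrow> nat \<Rightarrow> (nat \<Rightarrow> 'a) \<Rightarrow> bool" where
  "indep_family K R \<beta> \<longleftrightarrow>
     (\<forall>c. (\<forall>r<R. c r \<in> K) \<longrightarrow> (\<Sum>r<R. c r * \<beta> r) = 0 \<longrightarrow> (\<forall>r<R. c r = 0))"

lemma indep_familyD:
  assumes "indep_family K R \<beta>" "\<forall>r<R. c r \<in> K" "(\<Sum>r<R. c r * \<beta> r) = 0" "r < R"
  shows "c r = 0"
  using assms unfolding indep_family_def by blast

lemma indep_family_normalize:
  assumes "indep_family K R \<beta>" "b \<noteq> 0"
  shows "indep_family K R (\<lambda>r. \<beta> r / b)"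
  unfolding indep_family_def
proof (rule allI, intro impI)
  fix c assume c: "\<forall>r<R. c r \<in> K" "(\<Sum>r<R. c r * (\<beta> r / b)) = 0"
  have "(\<Sum>r<R. c r * \<beta> r) = (\<Sum>r<R. c r * (\<beta> r / b)) * b"
    using assms(2) by (simp add: sum_distrib_right)
  then have "(\<Sum>r<R. c r * \<beta> r) = 0"
    using c(2) by simp
  with c(1) show "\<forall>r<R. c r = 0"
    using assms(1) indep_familyD by blast
qed

lemma rank_list_le_length: "rank_list K B \<le> length B"
  by (induction B) auto

context
  fixes K :: "'a::field set"
  assumes K: "is_subfield K"
begin

lemma subfield_0: "0 \<in> K" and subfield_1: "1 \<in> K"
  and subfield_add: "x \<in> K \<Longrightarrow> y \<in> K \<Longrightarrow> x + y \<in> K"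
  and subfield_mult: "x \<in> K \<Longrightarrow> y \<in> K \<Longrightarrow> x * y \<in> K"
  and subfield_uminus: "x \<in> K \<Longrightarrow> - x \<in> K"
  and subfield_inverse: "x \<in> K \<Longrightarrow> inverse x \<in> K"
  using K unfolding is_subfield_def by auto

lemma subfield_diff: "x \<in> K \<Longrightarrow> y \<in> K \<Longrightarrow> x - y \<in> K"
  using subfield_add subfield_uminus by (metis diff_conv_add_uminus)

lemma indep_family_nonzero:
  assumes "indep_family K R \<beta>" "r < R"
  shows "\<beta> r \<noteq> 0"
proof
  assume "\<beta> r = 0"
  then have "(\<Sum>i<R. (if i = r then 1 else 0) * \<beta> i) = 0"
    by (intro sum.neutral) simp
  moreover have "\<forall>i<R. (if i = r then 1 else 0) \<in> K"
    using subfield_0 subfield_1 by simp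
  ultimately show False
    using indep_familyD[OF assms(1), of _ r] assms(2) by fastforce
qed

lemma span_list_0: "0 \<in> span_list K B"
  by (induction B) (auto intro!: exI[of _ 0] subfield_0)

lemma span_list_add: "u \<in> span_list K B \<Longrightarrow> v \<in> span_list K B \<Longrightarrow> u + v \<in> span_list K B"
proof (induction B arbitrary: u v)
  case (Cons b B)
  obtain c1 v1 where 1: "u = c1 * b + v1" "c1 \<in> K" "v1 \<in> span_list K B"
    using Cons.prems by auto
  obtain c2 v2 where 2: "v = c2 * b + v2" "c2 \<in> K" "v2 \<in> span_list K B"
    using Cons.prems by auto
  have "u + v = (c1 + c2) * b + (v1 + v2)"
    using 1 2 by (simp add: algebra_simps)
  moreover have "c1 + c2 \<in> K" "v1 + v2 \<in> span_list K B"
    using 1 2 Cons.IH subfield_add by auto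
  ultimately show ?case
    by auto
qed simp

lemma span_list_mult: "k \<in> K \<Longrightarrow> v \<in> span_list K B \<Longrightarrow> k * v \<in> span_list K B"
proof (induction B arbitrary: v)
  case (Cons b B)
  obtain c v1 where v: "v = c * b + v1" "c \<in> K" "v1 \<in> span_list K B"
    using Cons.prems by auto
  have "k * v = (k * c) * b + k * v1"
    using v by (simp add: algebra_simps)
  moreover have "k * c \<in> K" "k * v1 \<in> span_list K B"
    using v Cons subfield_mult by auto
  ultimately show ?case
    by auto
qed simp

lemma span_list_uminus: "v \<in> span_list K B \<Longrightarrow> - v \<in> span_list K B"
  using span_list_mult[OF subfield_uminus[OF subfield_1]] by fastforce

lemma span_list_diff: "u \<in> span_list K B \<Longrightarrow> v \<in> span_list K B \<Longrightarrow> u - v \<in> span_list K B"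
  using span_list_add span_list_uminus by (metis diff_conv_add_uminus)

lemma span_list_subset_Cons: "span_list K B \<subseteq> span_list K (b # B)"
  using subfield_0 by force

lemma span_list_Cons_self: "b \<in> span_list K (b # B)"
  using subfield_1 span_list_0 by force

lemma set_subset_span_list: "set B \<subseteq> span_list K B"
proof (induction B)
  case (Cons b B)
  then show ?case
    using span_list_Cons_self[of b B] span_list_subset_Cons[of B b] by (simp only: set_simps) blast
qed simp

lemma span_list_subset_append: "span_list K B \<subseteq> span_list K (E @ B)"
proof (induction E)
  case (Cons b E)
  then show ?case
    unfolding append_Cons by (rule order.trans[OF _ span_list_subset_Cons])
qed simp

lemma span_list_subset:
  assumes "set B \<subseteq> span_list K C"
  shows "span_list K B \<subseteq> span_list K C"
  using assms
proof (induction B)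
  case (Cons b B)
  then show ?case
    using span_list_add span_list_mult by auto
qed (simp add: span_list_0)

lemma span_list_Cons_eq:
  assumes "b \<in> span_list K B"
  shows "span_list K (b # B) = span_list K B"
proof
  show "span_list K (b # B) \<subseteq> span_list K B"
    using span_list_subset[of "b # B" B] set_subset_span_list[of B] assms by simp
qed (rule span_list_subset_Cons)

lemma sum_mem_span_list:
  assumes "\<forall>r<length B. c r \<in> K"
  shows "(\<Sum>r<length B. c r * B ! r) \<in> span_list K B"
  using assms
proof (induction B arbitrary: c)
  case (Cons b B)
  have "(\<Sum>r<length B. c (Suc r) * B ! r) \<in> span_list K B"
    using Cons.prems by (intro Cons.IH) auto
  moreover have "c 0 \<in> K"
    using Cons.prems by auto
  moreover have "(\<Sum>r<length (b # B). c r * (b # B) ! r) = c 0 * b + (\<Sum>r<length B. c (Suc r) * B ! r)"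
    by (simp only: length_Cons sum.lessThan_Suc_shift) simp
  ultimately show ?case
    by auto
qed simp

lemma span_list_iff_sum:
  "v \<in> span_list K B \<longleftrightarrow> (\<exists>c. (\<forall>r. c r \<in> K) \<and> v = (\<Sum>r<length B. c r * B ! r))"
proof
  show "v \<in> span_list K B" if "\<exists>c. (\<forall>r. c r \<in> K) \<and> v = (\<Sum>r<length B. c r * B ! r)"
    using that sum_mem_span_list by blast
next
  show "\<exists>c. (\<forall>r. c r \<in> K) \<and> v = (\<Sum>r<length B. c r * B ! r)" if "v \<in> span_list K B"
    using that
  proof (induction B arbitrary: v)
    case Nil
    then show ?case
      using subfield_0 by (intro exI[of _ "\<lambda>_. 0"]) simp
  next
    case (Cons b B)
    then obtain c0 v1 where v: "v = c0 * b + v1" "c0 \<in> K" "v1 \<in> span_list K B"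
      by auto
    then obtain c where c: "\<forall>r. c r \<in> K" "v1 = (\<Sum>r<length B. c r * B ! r)"
      using Cons.IH by blast
    have "v = (\<Sum>r<length (b # B). case_nat c0 c r * (b # B) ! r)"
      using v c by (simp only: length_Cons sum.lessThan_Suc_shift) simp
    moreover have "\<forall>r. case_nat c0 c r \<in> K"
      using v(2) c(1) by (simp split: nat.split)
    ultimately show ?case
      by blast
  qed
qed

lemma card_span_list:
  assumes "finite K"
  shows "card (span_list K B) = card K ^ rank_list K B"
proof (induction B)
  case (Cons b B)
  show ?case
  proof (cases "b \<in> span_list K B")
    case True
    then show ?thesis
      using Cons span_list_Cons_eq by simp
  next
    case False
    have "inj_on (\<lambda>(c, v). c * b + v) (K \<times> span_list K B)"
    proof (rule inj_onI, clarify)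
      fix c1 v1 c2 v2
      assume h: "c1 \<in> K" "v1 \<in> span_list K B" "c2 \<in> K" "v2 \<in> span_list K B"
        "c1 * b + v1 = c2 * b + v2"
      show "c1 = c2 \<and> v1 = v2"
      proof (rule ccontr)
        assume "\<not> (c1 = c2 \<and> v1 = v2)"
        then have "c1 \<noteq> c2"
          using h(5) by auto
        then have "b = inverse (c1 - c2) * (v2 - v1)"
          using h(5) by (simp add: field_simps)
        then have "b \<in> span_list K B"
          using h span_list_mult span_list_diff subfield_inverse subfield_diff by simp
        then show False
          using False by simp
      qed
    qed
    moreover have "span_list K (b # B) = (\<lambda>(c, v). c * b + v) ` (K \<times> span_list K B)"
      by auto
    ultimately have "card (span_list K (b # B)) = card K * card (span_list K B)"
      by (simp add: card_image card_cartesian_product)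
    then show ?thesis
      using Cons False by simp
  qed
qed simp

lemma indep_family_if_indep_list: "indep_list K B \<Longrightarrow> indep_family K (length B) (\<lambda>r. B ! r)"
proof (induction B)
  case (Cons b B)
  show ?case
    unfolding indep_family_def
  proof (rule allI, intro impI)
    fix c
    assume c: "\<forall>r<length (b # B). c r \<in> K" "(\<Sum>r<length (b # B). c r * (b # B) ! r) = 0"
    define v where "v = (\<Sum>r<length B. c (Suc r) * B ! r)"
    have sum: "c 0 * b + v = 0"
      using c(2) unfolding v_def by (simp only: length_Cons sum.lessThan_Suc_shift) simp
    have v: "v \<in> span_list K B"
      unfolding v_def using c(1) by (intro sum_mem_span_list) simp
    have c0: "c 0 = 0"
    proof (rule ccontr)
      assume "c 0 \<noteq> 0"
      then have "b = inverse (c 0) * (c 0 * b)"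
        by simp
      also have "c 0 * b = - v"
        using sum by (simp add: eq_neg_iff_add_eq_0)
      finally have "b \<in> span_list K B"
        using span_list_mult[OF subfield_inverse span_list_uminus[OF v]] c(1) by simp
      then show False
        using Cons.prems by simp
    qed
    have "indep_family K (length B) (\<lambda>r. B ! r)"
      using Cons by simp
    moreover have "(\<Sum>r<length B. c (Suc r) * B ! r) = 0"
      using sum c0 unfolding v_def by simp
    ultimately have "\<forall>r<length B. c (Suc r) = 0"
      using c(1) by (auto intro: indep_familyD[of K "length B" "\<lambda>r. B ! r" "\<lambda>r. c (Suc r)"])
    then show "\<forall>r<length (b # B). c r = 0"
      using c0 less_Suc_eq_0_disj by force
  qed
qed (simp add: indep_family_def)

lemma ex_indep_list_same_span:
  "\<exists>A. indep_list K A \<and> span_list K A = span_list K B \<and> length A \<le> length B"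
proof (induction B)
  case (Cons b B)
  then obtain A where A: "indep_list K A" "span_list K A = span_list K B" "length A \<le> length B"
    by blast
  show ?case
  proof (cases "b \<in> span_list K B")
    case True
    then show ?thesis
      using A span_list_Cons_eq by (intro exI[of _ A]) simp
  next
    case False
    then show ?thesis
      using A by (intro exI[of _ "b # A"]) auto
  qed
qed simp

lemma ex_indep_list_extend:
  assumes "indep_list K B"
  shows "\<exists>E. indep_list K (E @ B) \<and> set Y \<subseteq> span_list K (E @ B) \<and> length E \<le> length Y"
proof (induction Y)
  case (Cons y Y)
  then obtain E where E: "indep_list K (E @ B)" "set Y \<subseteq> span_list K (E @ B)" "length E \<le> length Y"
    by blast
  show ?case
  proof (cases "y \<in> span_list K (E @ B)")
    case True
    then show ?thesis
      using E by (intro exI[of _ E]) simp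
  next
    case False
    then show ?thesis
      using E span_list_subset_Cons[of "E @ B" y] span_list_Cons_self[of y "E @ B"]
      by (intro exI[of _ "y # E"]) auto
  qed
qed (use assms in simp)

definition coord :: "'a list \<Rightarrow> 'a \<Rightarrow> nat \<Rightarrow> 'a" where
  "coord B v = (SOME c. (\<forall>r. c r \<in> K) \<and> v = (\<Sum>r<length B. c r * B ! r))"

lemma coord_mem_and_sum:
  assumes "v \<in> span_list K B"
  shows "coord B v r \<in> K" "v = (\<Sum>r<length B. coord B v r * B ! r)"
proof -
  have "\<exists>c. (\<forall>r. c r \<in> K) \<and> v = (\<Sum>r<length B. c r * B ! r)"
    using assms by (simp only: span_list_iff_sum)
  from someI_ex[OF this] show "coord B v r \<in> K" "v = (\<Sum>r<length B. coord B v r * B ! r)"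
    unfolding coord_def by blast+
qed

lemma coord_unique:
  assumes "indep_list K B" and "\<forall>r. c r \<in> K" and "v = (\<Sum>r<length B. c r * B ! r)"
    and "r < length B"
  shows "coord B v r = c r"
proof -
  have "v \<in> span_list K B"
    unfolding assms(3) using assms(2) by (intro sum_mem_span_list) simp
  note v = coord_mem_and_sum[OF this]
  let ?d = "\<lambda>r. c r - coord B v r"
  have "(\<Sum>r<length B. ?d r * B ! r)
      = (\<Sum>r<length B. c r * B ! r) - (\<Sum>r<length B. coord B v r * B ! r)"
    by (simp add: left_diff_distrib sum_subtractf)
  also have "\<dots> = 0"
    by (simp flip: assms(3) v(2))
  finally have sum: "(\<Sum>r<length B. ?d r * B ! r) = 0" .
  have "\<forall>r<length B. ?d r \<in> K"
    using assms(2) v(1) by (simp add: subfield_diff)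
  from indep_familyD[OF indep_family_if_indep_list[OF assms(1)] this sum assms(4)]
  have "?d r = 0" .
  then show ?thesis
    by simp
qed

lemma coord_nth:
  assumes "indep_list K B" "i < length B" "r < length B"
  shows "coord B (B ! i) r = (if r = i then 1 else 0)"
proof -
  let ?c = "\<lambda>r. if r = i then (1 :: 'a) else 0"
  have "(\<Sum>r<length B. ?c r * B ! r) = (\<Sum>r<length B. if r = i then B ! i else 0)"
    by (rule sum.cong) auto
  also have "\<dots> = B ! i"
    using assms(2) by simp
  finally have sum: "B ! i = (\<Sum>r<length B. ?c r * B ! r)" ..
  have "\<forall>r. ?c r \<in> K"
    using subfield_0 subfield_1 by simp
  from coord_unique[OF assms(1) this sum assms(3)] show ?thesis .
qed

lemma coord_linear:
  assumes "indep_list K B" "u \<in> span_list K B" "v \<in> span_list K B" "k \<in> K" "r < length B"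
  shows "coord B (k * u + v) r = k * coord B u r + coord B v r"
proof -
  note u = coord_mem_and_sum[OF assms(2)] and v = coord_mem_and_sum[OF assms(3)]
  have "(\<Sum>r<length B. (k * coord B u r + coord B v r) * B ! r)
      = k * (\<Sum>r<length B. coord B u r * B ! r) + (\<Sum>r<length B. coord B v r * B ! r)"
    by (simp add: sum_distrib_left sum.distrib distrib_right mult.assoc)
  also have "\<dots> = k * u + v"
    using u(2) v(2) by metis
  finally have sum: "k * u + v = (\<Sum>r<length B. (k * coord B u r + coord B v r) * B ! r)" ..
  have "\<forall>r. k * coord B u r + coord B v r \<in> K"
    using u(1) v(1) assms(4) subfield_add subfield_mult by blast
  from coord_unique[OF assms(1) this sum assms(5)] show ?thesis .
qed

lemma coord_eq_0_on_span:
  assumes "indep_list K B" "r < length B" "set S \<subseteq> span_list K B"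
    and "\<forall>s\<in>set S. coord B s r = 0" and "v \<in> span_list K S"
  shows "coord B v r = 0"
  using assms(3-5)
proof (induction S arbitrary: v)
  case Nil
  then have "v = 0"
    by simp
  moreover have "coord B 0 r = 0"
    using coord_unique[OF assms(1) _ _ assms(2), of "\<lambda>_. 0"] subfield_0 by simp
  ultimately show ?case
    by simp
next
  case (Cons s S)
  then obtain c v1 where v: "v = c * s + v1" "c \<in> K" "v1 \<in> span_list K S"
    by auto
  have s: "s \<in> span_list K B" and S: "set S \<subseteq> span_list K B"
    using Cons.prems(1) by auto
  then have "v1 \<in> span_list K B"
    using span_list_subset v(3) by blast
  then have "coord B v r = c * coord B s r + coord B v1 r"
    unfolding v(1) by (rule coord_linear[OF assms(1) s _ v(2) assms(2)])
  also have "\<dots> = 0"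
    using Cons.IH[OF S _ v(3)] Cons.prems(2) by simp
  finally show ?case .
qed

lemma sum_zip_mem_span_list:
  assumes "\<forall>v\<in>set Y. f v \<in> K"
  shows "(\<Sum>(u, v)\<leftarrow>zip X Y. u * f v) \<in> span_list K X"
  using assms
proof (induction X arbitrary: Y)
  case (Cons b X)
  then show ?case
  proof (cases Y)
    case (Cons v Y')
    then have "f v * b + (\<Sum>(u, v)\<leftarrow>zip X Y'. u * f v) \<in> span_list K (b # X)"
      using Cons.prems Cons.IH by auto
    then show ?thesis
      using Cons by (simp add: mult.commute)
  qed (simp del: span_list.simps add: span_list_0)
qed simp

lemma ex_basis_coord_vanishing:
  assumes "z \<notin> span_list K X"
  obtains B r where "indep_list K B" "r < length B" "B ! r = z"
    "length B \<le> length X + length Y + 1" "set X \<union> set Y \<subseteq> span_list K B"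
    "\<And>u. u \<in> span_list K X \<Longrightarrow> coord B u r = 0"
proof -
  obtain A where A: "indep_list K A" "span_list K A = span_list K X" "length A \<le> length X"
    using ex_indep_list_same_span by blast
  then have "indep_list K (z # A)"
    using assms by simp
  then obtain E where E: "indep_list K (E @ z # A)" "set Y \<subseteq> span_list K (E @ z # A)"
    "length E \<le> length Y"
    using ex_indep_list_extend by blast
  define B where "B = E @ z # A"
  define r where "r = length E"
  have B: "indep_list K B" "r < length B" "B ! r = z" "length B \<le> length X + length Y + 1"
    using E A by (simp_all add: B_def r_def)
  have "span_list K A \<subseteq> span_list K B"
    unfolding B_def using span_list_subset_append[of "z # A" E] span_list_subset_Cons
    by blast
  then have "set X \<subseteq> span_list K B"
    using A(2) set_subset_span_list[of X] by blast
  moreover have "set Y \<subseteq> span_list K B"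
    using E(2) by (simp add: B_def)
  moreover have "coord B u r = 0" if "u \<in> span_list K X" for u
  proof (rule coord_eq_0_on_span[OF B(1,2)])
    show "set A \<subseteq> span_list K B"
      using set_subset_span_list[of A] \<open>span_list K A \<subseteq> span_list K B\<close> by blast
    show "u \<in> span_list K A"
      using that A(2) by simp
    show "\<forall>s\<in>set A. coord B s r = 0"
    proof
      fix s assume "s \<in> set A"
      then obtain j where j: "j < length A" "s = A ! j"
        by (metis in_set_conv_nth)
      then have "B ! (Suc r + j) = s" "Suc r + j < length B"
        by (simp_all add: B_def r_def nth_append)
      then show "coord B s r = 0"
        using coord_nth[OF B(1) _ B(2), of "Suc r + j"] by simp
    qed
  qed
  ultimately show ?thesis
    using B that by blast
qed

end

context
  fixes K :: "'a::{field,finite} set"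
  assumes K: "is_subfield K"
begin

lemma card_span_list_le: "card (span_list K x) \<le> card (UNIV :: 'a set)"
  by (rule card_mono) simp_all

lemma card_rank_list_Cons:
  "real (card {w. rank_list K (w # x) = u}) =
     (if rank_list K x = u then real (card K) ^ u else 0)
   + (if Suc (rank_list K x) = u then real (card (UNIV :: 'a set)) - real (card K) ^ rank_list K x else 0)"
proof -
  have card: "card (span_list K x) = card K ^ rank_list K x"
    using card_span_list[OF K finite] .
  consider "rank_list K x = u" | "Suc (rank_list K x) = u" | "rank_list K x \<noteq> u" "Suc (rank_list K x) \<noteq> u"
    by blast
  then show ?thesis
  proof cases
    case 1
    then have "{w. rank_list K (w # x) = u} = span_list K x"
      by auto
    then show ?thesis
      using 1 card by simp
  next
    case 2
    then have "{w. rank_list K (w # x) = u} = UNIV - span_list K x"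
      by auto
    then show ?thesis
      using 2 card card_span_list_le[of x] by (simp add: card_Diff_subset)
  next
    case 3
    then have "{w. rank_list K (w # x) = u} = {}"
      by auto
    then show ?thesis
      using 3 by simp
  qed
qed

lemma card_lists_rank_Suc:
  "real (card {x :: 'a list. length x = Suc L \<and> rank_list K x = u}) =
     real (card K) ^ u * real (card {x :: 'a list. length x = L \<and> rank_list K x = u})
   + (if u > 0 then (real (card (UNIV :: 'a set)) - real (card K) ^ (u - 1))
        * real (card {x :: 'a list. length x = L \<and> rank_list K x = u - 1}) else 0)"
proof -
  let ?S = "{x :: 'a list. length x = L}"
  have "card {x. length x = Suc L \<and> rank_list K x = u} = (\<Sum>x\<in>?S. card {w. rank_list K (w # x) = u})"
    by (rule card_lists_length_Suc)
  then have "real (card {x. length x = Suc L \<and> rank_list K x = u})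
      = (\<Sum>x\<in>?S. if rank_list K x = u then real (card K) ^ u else 0)
      + (\<Sum>x\<in>?S. if Suc (rank_list K x) = u
           then real (card (UNIV :: 'a set)) - real (card K) ^ rank_list K x else 0)"
    by (simp only: of_nat_sum card_rank_list_Cons sum.distrib)
  also have "(\<Sum>x\<in>?S. if rank_list K x = u then real (card K) ^ u else 0)
      = real (card K) ^ u * real (card {x :: 'a list. length x = L \<and> rank_list K x = u})"
    by (rule sum_lists_length_if)
  also have "(\<Sum>x\<in>?S. if Suc (rank_list K x) = u
        then real (card (UNIV :: 'a set)) - real (card K) ^ rank_list K x else 0)
      = (if u > 0 then (real (card (UNIV :: 'a set)) - real (card K) ^ (u - 1))
          * real (card {x :: 'a list. length x = L \<and> rank_list K x = u - 1}) else 0)"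
  proof (cases u)
    case (Suc v)
    have "(\<Sum>x\<in>?S. if Suc (rank_list K x) = u
        then real (card (UNIV :: 'a set)) - real (card K) ^ rank_list K x else 0)
      = (\<Sum>x\<in>?S. if rank_list K x = v then real (card (UNIV :: 'a set)) - real (card K) ^ v else 0)"
      using Suc by (intro sum.cong) auto
    then show ?thesis
      using Suc sum_lists_length_if by simp
  qed simp
  finally show ?thesis .
qed

lemma card_lists_rank:
  "real (card {x :: 'a list. length x = L \<and> rank_list K x = u}) =
     gauss_binom (real (card K)) L u * (\<Prod>j<u. real (card (UNIV :: 'a set)) - real (card K) ^ j)"
proof (induction L arbitrary: u)
  case 0
  have "{x :: 'a list. length x = 0 \<and> rank_list K x = u} = (if u = 0 then {[]} else {})"
    by auto
  then show ?case
    by (simp add: gauss_binom_0_left)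
next
  case (Suc L)
  let ?q = "real (card K)" and ?Q = "real (card (UNIV :: 'a set))"
  have "{0, 1} \<subseteq> K"
    using subfield_0[OF K] subfield_1[OF K] by simp
  then have "2 \<le> card K"
    using card_mono[OF finite, of "{0, 1}" K] by simp
  then have q: "?q > 1"
    by simp
  show ?case
  proof (cases u)
    case 0
    then show ?thesis
      using card_lists_rank_Suc[of L 0] Suc.IH[of 0] by simp
  next
    case (Suc v)
    have "real (card {x :: 'a list. length x = Suc L \<and> rank_list K x = u})
        = ?q ^ Suc v * (gauss_binom ?q L (Suc v) * (\<Prod>j<Suc v. ?Q - ?q ^ j))
          + (?Q - ?q ^ v) * (gauss_binom ?q L v * (\<Prod>j<v. ?Q - ?q ^ j))"
      using card_lists_rank_Suc[of L u] Suc.IH[of u] Suc.IH[of v] Suc by simp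
    also have "\<dots> = (?q ^ Suc v * gauss_binom ?q L (Suc v) + gauss_binom ?q L v) * (\<Prod>j<Suc v. ?Q - ?q ^ j)"
      by (simp add: algebra_simps)
    finally show ?thesis
      using Suc gauss_binom_Suc_Suc[OF q] by simp
  qed
qed

end

locale frob_forms =
  fixes m d e :: nat and K :: "'a::{field,finite} set"
  assumes card_UNIV: "card (UNIV :: 'a set) = 2 ^ m" and m_pos: "m > 0"
    and gcd_m_d: "gcd m d = e" and K_eq: "K = fixed_field e"
begin

definition \<sigma> :: "int \<Rightarrow> 'a \<Rightarrow> 'a" where
  "\<sigma> a = frob m (a * int d)"

lemma e_dvd_m: "e dvd m" and e_dvd_d: "e dvd d"
  using gcd_m_d by auto

lemma CHAR_2: "CHAR('a) = 2"
  using CHAR_eq_2_if_card_eq_power_2 card_UNIV m_pos by blast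

lemma is_subfield_K: "is_subfield K"
  unfolding K_eq using CHAR_2 by (rule is_subfield_fixed_field)

lemma \<sigma>_fixes_K:
  assumes "c \<in> K"
  shows "\<sigma> a c = c"
proof -
  have "int e dvd a * int d"
    by (intro dvd_mult) (simp add: e_dvd_d)
  then show ?thesis
    unfolding \<sigma>_def using assms K_eq e_dvd_m m_pos by (intro frob_fixed_field) simp_all
qed

lemma mem_K_if_\<sigma>_fixes: "\<sigma> 1 z = z \<Longrightarrow> z \<in> K"
  unfolding \<sigma>_def K_eq using mem_fixed_field_if_frob_fixed[OF CHAR_2 card_UNIV gcd_m_d] by simp

lemma \<sigma>_\<sigma>: "\<sigma> a (\<sigma> b x) = \<sigma> (a + b) x"
  unfolding \<sigma>_def using frob_frob[OF card_UNIV m_pos] by (simp add: distrib_right)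

lemma \<sigma>_add: "\<sigma> a (x + y) = \<sigma> a x + \<sigma> a y"
  unfolding \<sigma>_def by (rule frob_add[OF CHAR_2])

lemma \<sigma>_mult: "\<sigma> a (x * y) = \<sigma> a x * \<sigma> a y"
  unfolding \<sigma>_def by (rule frob_mult)

lemma \<sigma>_sum: "\<sigma> a (\<Sum>i\<in>I. f i) = (\<Sum>i\<in>I. \<sigma> a (f i))"
  unfolding \<sigma>_def by (rule frob_sum[OF CHAR_2])

lemma \<sigma>_eq_0_iff [simp]: "\<sigma> a x = 0 \<longleftrightarrow> x = 0"
  unfolding \<sigma>_def by simp

lemma \<sigma>_1 [simp]: "\<sigma> a 1 = 1"
  unfolding \<sigma>_def frob_def by simp

lemma \<sigma>_zero [simp]: "\<sigma> 0 x = x"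
  unfolding \<sigma>_def frob_def using m_pos by simp

lemma add_self: "(x :: 'a) + x = 0"
  by (rule add_self_CHAR_2[OF CHAR_2])

lemma add_eq_0_iff_eq: "(x :: 'a) + y = 0 \<longleftrightarrow> x = y"
  using add_eq_0_iff2[of x y] uminus_CHAR_2[OF CHAR_2, of y] by simp

text \<open>The difference operator \<open>\<gamma> \<mapsto> \<sigma> 1 \<gamma> + \<gamma>\<close> has kernel \<open>K\<close>; applied to a
  \<open>K\<close>-independent family whose last member is \<open>1\<close> it kills that member and keeps the
  others \<open>K\<close>-independent.\<close>
lemma indep_family_difference:
  assumes "indep_family K (Suc R) \<gamma>" "\<gamma> R = 1"
  shows "indep_family K R (\<lambda>r. \<sigma> 1 (\<gamma> r) + \<gamma> r)"
  unfolding indep_family_def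
proof (rule allI, intro impI)
  fix c assume c: "\<forall>r<R. c r \<in> K" "(\<Sum>r<R. c r * (\<sigma> 1 (\<gamma> r) + \<gamma> r)) = 0"
  define v where "v = (\<Sum>r<R. c r * \<gamma> r)"
  have "\<sigma> 1 v = (\<Sum>r<R. c r * \<sigma> 1 (\<gamma> r))"
    unfolding v_def using c(1) by (simp add: \<sigma>_sum \<sigma>_mult \<sigma>_fixes_K)
  then have "\<sigma> 1 v + v = 0"
    using c(2) unfolding v_def by (simp add: sum.distrib distrib_left)
  then have "v \<in> K"
    by (intro mem_K_if_\<sigma>_fixes) (simp add: add_eq_0_iff_eq)
  define c' where "c' r = (if r = R then v else c r)" for r
  have "(\<Sum>r<Suc R. c' r * \<gamma> r) = v + v"
    using assms(2) by (simp add: c'_def v_def)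
  then have "(\<Sum>r<Suc R. c' r * \<gamma> r) = 0"
    by (simp add: add_self)
  moreover have "\<forall>r<Suc R. c' r \<in> K"
    using c(1) \<open>v \<in> K\<close> by (simp add: c'_def)
  ultimately have c': "\<forall>r<Suc R. c' r = 0"
    using assms(1) indep_familyD by blast
  show "\<forall>r<R. c r = 0"
  proof (intro allI impI)
    fix r assume "r < R"
    then have "c' r = 0"
      using c' by simp
    then show "c r = 0"
      using \<open>r < R\<close> by (simp add: c'_def)
  qed
qed

text \<open>A Moore-determinant argument: once the last member is normalised to \<open>1\<close>, adding the
  equations for consecutive exponents \<open>a\<close> and \<open>a + 1\<close> eliminates it and leaves the family
  \<open>\<sigma> 1 \<gamma> + \<gamma>\<close> of \<open>indep_family_difference\<close> on a window one shorter.\<close>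
lemma moore_independence:
  assumes "indep_family K R \<beta>"
    and "\<And>a. a0 \<le> a \<Longrightarrow> a < a0 + int R \<Longrightarrow> (\<Sum>r<R. \<alpha> r * \<sigma> a (\<beta> r)) = 0"
    and "r < R"
  shows "\<alpha> r = 0"
  using assms
proof (induction R arbitrary: \<beta> \<alpha> a0 r)
  case (Suc R)
  have "\<beta> R \<noteq> 0"
    using indep_family_nonzero[OF is_subfield_K Suc.prems(1)] by simp
  define \<gamma> where "\<gamma> r = \<beta> r / \<beta> R" for r
  have \<gamma>: "indep_family K (Suc R) \<gamma>" "\<gamma> R = 1"
    unfolding \<gamma>_def using indep_family_normalize[OF Suc.prems(1) \<open>\<beta> R \<noteq> 0\<close>] \<open>\<beta> R \<noteq> 0\<close> by simp_all
  have eq\<gamma>: "(\<Sum>r<R. \<alpha> r * \<sigma> a (\<gamma> r)) + \<alpha> R = 0" if "a0 \<le> a" "a < a0 + int (Suc R)" for a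
  proof -
    have "\<gamma> r * \<beta> R = \<beta> r" for r
      using \<open>\<beta> R \<noteq> 0\<close> by (simp add: \<gamma>_def)
    then have "(\<Sum>r<Suc R. \<alpha> r * \<sigma> a (\<gamma> r)) * \<sigma> a (\<beta> R) = (\<Sum>r<Suc R. \<alpha> r * \<sigma> a (\<beta> r))"
      unfolding sum_distrib_right by (intro sum.cong) (simp_all add: mult.assoc flip: \<sigma>_mult)
    then have "(\<Sum>r<Suc R. \<alpha> r * \<sigma> a (\<gamma> r)) = 0"
      using Suc.prems(2)[OF that] \<open>\<beta> R \<noteq> 0\<close> by simp
    then show ?thesis
      using \<gamma>(2) by simp
  qed
  have "\<alpha> r = 0" if "r < R" for r
  proof (rule Suc.IH[OF indep_family_difference[OF \<gamma>] _ that])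
    fix a assume a: "a0 \<le> a" "a < a0 + int R"
    have "(\<Sum>r<R. \<alpha> r * \<sigma> (a + 1) (\<gamma> r)) = (\<Sum>r<R. \<alpha> r * \<sigma> a (\<gamma> r))"
      using eq\<gamma>[of a] eq\<gamma>[of "a + 1"] a by (simp add: add_eq_0_iff_eq)
    then show "(\<Sum>r<R. \<alpha> r * \<sigma> a (\<sigma> 1 (\<gamma> r) + \<gamma> r)) = 0"
      by (simp add: \<sigma>_add \<sigma>_\<sigma> distrib_left sum.distrib add_eq_0_iff_eq add_self)
  qed
  moreover have "\<alpha> R = 0"
    using eq\<gamma>[of a0] calculation by simp
  ultimately show ?case
    using Suc.prems(3) less_Suc_eq by blast
qed simp


definition bform :: "int \<Rightarrow> 'a list \<Rightarrow> 'a list \<Rightarrow> 'a" where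
  "bform a xs ys = (\<Sum>(u, v)\<leftarrow>zip xs ys. u * \<sigma> a v + \<sigma> a u * v)"

lemma bform_Nil [simp]: "bform a [] ys = 0" "bform a xs [] = 0"
  by (simp_all add: bform_def)

lemma bform_Cons [simp]:
  "bform a (u # xs) (v # ys) = u * \<sigma> a v + \<sigma> a u * v + bform a xs ys"
  by (simp add: bform_def)

lemma \<sigma>_expand:
  assumes "v \<in> span_list K B"
  shows "\<sigma> a v = (\<Sum>r<length B. coord K B v r * \<sigma> a (B ! r))"
proof -
  note v = coord_mem_and_sum[OF is_subfield_K assms]
  have "\<sigma> a (\<Sum>r<length B. coord K B v r * B ! r) = (\<Sum>r<length B. coord K B v r * \<sigma> a (B ! r))"
    using v(1) by (simp add: \<sigma>_sum \<sigma>_mult \<sigma>_fixes_K)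
  then show ?thesis
    using v(2) by metis
qed

definition bform_coeff :: "'a list \<Rightarrow> 'a list \<Rightarrow> 'a list \<Rightarrow> nat \<Rightarrow> 'a" where
  "bform_coeff B xs ys r = (\<Sum>(u, v)\<leftarrow>zip xs ys. u * coord K B v r + v * coord K B u r)"

lemma bform_expand:
  assumes "set xs \<union> set ys \<subseteq> span_list K B"
  shows "bform a xs ys = (\<Sum>r<length B. bform_coeff B xs ys r * \<sigma> a (B ! r))"
  using assms
proof (induction xs arbitrary: ys)
  case Nil
  then show ?case
    by (simp add: bform_coeff_def)
next
  case (Cons u xs)
  show ?case
  proof (cases ys)
    case Nil
    then show ?thesis
      by (simp add: bform_coeff_def)
  next
    case (Cons v ys')
    have u: "u \<in> span_list K B" and v: "v \<in> span_list K B"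
      and rest: "set xs \<union> set ys' \<subseteq> span_list K B"
      using Cons.prems Cons by auto
    have "bform a (u # xs) (v # ys') = u * \<sigma> a v + \<sigma> a u * v + bform a xs ys'"
      by simp
    also have "\<dots> = (\<Sum>r<length B. (u * coord K B v r + v * coord K B u r) * \<sigma> a (B ! r))
        + (\<Sum>r<length B. bform_coeff B xs ys' r * \<sigma> a (B ! r))"
      unfolding \<sigma>_expand[OF u] \<sigma>_expand[OF v] Cons.IH[OF rest]
      by (simp add: sum_distrib_left sum_distrib_right sum.distrib algebra_simps)
    also have "\<dots> = (\<Sum>r<length B. bform_coeff B (u # xs) (v # ys') r * \<sigma> a (B ! r))"
      by (simp add: bform_coeff_def sum.distrib[symmetric] distrib_right)
    finally show ?thesis
      using Cons by simp
  qed
qed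

lemma bform_coeff_eq_0:
  assumes "indep_list K B" "set xs \<union> set ys \<subseteq> span_list K B"
    and "\<And>a. a0 \<le> a \<Longrightarrow> a < a0 + int (length B) \<Longrightarrow> bform a xs ys = 0"
    and "r < length B"
  shows "bform_coeff B xs ys r = 0"
proof (rule moore_independence)
  show "indep_family K (length B) (\<lambda>r. B ! r)"
    by (rule indep_family_if_indep_list[OF is_subfield_K assms(1)])
  show "(\<Sum>r<length B. bform_coeff B xs ys r * \<sigma> a (B ! r)) = 0"
    if "a0 \<le> a" "a < a0 + int (length B)" for a
    using assms(3)[OF that] bform_expand[OF assms(2)] by simp
qed (rule assms(4))


lemma ex_bform_eq_of_mem_span:
  assumes "v \<in> span_list K x"
  shows "\<exists>y. length y = length x \<and> (\<forall>a. bform a x y = bform a [v] [z])"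
  using assms
proof (induction x arbitrary: v)
  case (Cons b x)
  then obtain c v1 where v: "v = c * b + v1" "c \<in> K" "v1 \<in> span_list K x"
    by auto
  then obtain y where y: "length y = length x" "\<forall>a. bform a x y = bform a [v1] [z]"
    using Cons.IH by blast
  have "bform a (b # x) ((c * z) # y) = bform a [v] [z]" for a
    using y v(2) unfolding v(1) by (simp add: \<sigma>_add \<sigma>_mult \<sigma>_fixes_K algebra_simps)
  then show ?case
    using y by (intro exI[of _ "(c * z) # y"]) simp
qed simp

text \<open>If \<open>z\<close> were outside the span, it could be taken as a basis vector whose coordinate
  functional vanishes on \<open>w # x\<close>; the vanishing of its coefficient in \<open>bform_expand\<close>
  (\<open>bform_coeff_eq_0\<close>) would then put \<open>w\<close> into the span of \<open>x\<close>.\<close>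
lemma first_coord_mem_span:
  assumes w: "w \<notin> span_list K x" and y: "length y = length x"
    and W: "2 * length x + 2 \<le> W"
    and sol: "\<And>a. a0 \<le> a \<Longrightarrow> a < a0 + int W \<Longrightarrow> bform a (w # x) (z # y) = 0"
  shows "z \<in> span_list K (w # x)"
proof (rule ccontr)
  assume "z \<notin> span_list K (w # x)"
  then obtain B r where B: "indep_list K B" "r < length B" "B ! r = z"
    "length B \<le> length (w # x) + length y + 1" "set (w # x) \<union> set y \<subseteq> span_list K B"
    and coord0: "\<And>u. u \<in> span_list K (w # x) \<Longrightarrow> coord K B u r = 0"
    by (rule ex_basis_coord_vanishing[OF is_subfield_K, where Y = y]) blast+
  have "z \<in> span_list K B"
    using B(2,3) set_subset_span_list[OF is_subfield_K, of B] by (metis nth_mem subsetD)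
  then have span: "set (w # x) \<union> set (z # y) \<subseteq> span_list K B"
    using B(5) by auto
  have "bform_coeff B (w # x) (z # y) r = 0"
    using B(4) y W by (intro bform_coeff_eq_0[OF B(1) span _ B(2), of a0] sol) simp_all
  moreover have x0: "coord K B u r = 0" if "u \<in> set (w # x)" for u
    using coord0 that set_subset_span_list[OF is_subfield_K, of "w # x"] by blast
  then have "bform_coeff B x y r = (\<Sum>(u, v)\<leftarrow>zip x y. u * coord K B v r)"
    unfolding bform_coeff_def
    by (intro arg_cong[where f = sum_list] map_cong) (auto dest: set_zip_leftD)
  moreover have "coord K B z r = 1"
    using coord_nth[OF is_subfield_K B(1,2,2)] B(3) by simp
  ultimately have "w + (\<Sum>(u, v)\<leftarrow>zip x y. u * coord K B v r) = 0"
    using x0[of w] by (simp add: bform_coeff_def)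
  then have "w = (\<Sum>(u, v)\<leftarrow>zip x y. u * coord K B v r)"
    by (simp add: add_eq_0_iff_eq)
  also have "\<dots> \<in> span_list K x"
    using coord_mem_and_sum(1)[OF is_subfield_K] span
    by (intro sum_zip_mem_span_list[OF is_subfield_K]) auto
  finally show False
    using w by simp
qed


definition solutions :: "int set \<Rightarrow> 'a list \<Rightarrow> 'a list set" where
  "solutions A x = {y. length y = length x \<and> (\<forall>a\<in>A. bform a x y = 0)}"

lemma finite_solutions: "finite (solutions A x)"
proof (rule finite_subset)
  show "solutions A x \<subseteq> {y. length y = length x}"
    by (auto simp: solutions_def)
qed (rule finite_lists_length_eq_UNIV)

lemma Cons_mem_solutions_iff:
  "z # y \<in> solutions A (w # x) \<longleftrightarrow>
     length y = length x \<and> (\<forall>a\<in>A. bform a x y = bform a [w] [z])"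
proof -
  have "bform a (w # x) (z # y) = 0 \<longleftrightarrow> bform a x y = bform a [w] [z]" for a
    unfolding bform_Cons bform_Nil add_0_right add_eq_0_iff_eq by (rule eq_commute)
  then have "(\<forall>a\<in>A. bform a (w # x) (z # y) = 0) \<longleftrightarrow> (\<forall>a\<in>A. bform a x y = bform a [w] [z])"
    by blast
  then show ?thesis
    unfolding solutions_def mem_Collect_eq length_Cons by (simp only: nat.inject)
qed

lemma bform_map2_add:
  "length y = length x \<Longrightarrow> length y' = length x \<Longrightarrow>
     bform a x (map2 (+) y y') = bform a x y + bform a x y'"
proof (induction x arbitrary: y y')
  case (Cons u x)
  then obtain v ys v' ys' where "y = v # ys" "y' = v' # ys'"
    by (metis length_Suc_conv)
  then show ?case
    using Cons by (simp add: \<sigma>_add algebra_simps)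
qed simp

lemma map2_add_map2_add:
  "length y = length y' \<Longrightarrow> map2 (+) (map2 (+) y y') y' = (y :: 'a list)"
proof (induction y arbitrary: y')
  case (Cons v y)
  then show ?case
    by (cases y') (simp_all add: add.assoc add_self)
qed simp

text \<open>The solutions with a prescribed first entry form a coset of \<open>solutions A x\<close>.\<close>
lemma card_solutions_fibre:
  assumes y0: "z # y0 \<in> solutions A (w # x)"
  shows "card {y. z # y \<in> solutions A (w # x)} = card (solutions A x)"
proof -
  let ?F = "{y. z # y \<in> solutions A (w # x)}"
  have len: "length y0 = length x"
    using y0 by (simp add: Cons_mem_solutions_iff)
  have iff: "y \<in> ?F \<longleftrightarrow> map2 (+) y y0 \<in> solutions A x" if y: "length y = length x" for y
  proof -
    have "bform a x (map2 (+) y y0) = 0 \<longleftrightarrow> bform a x y = bform a [w] [z]" if "a \<in> A" for a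
      using y0 that y len bform_map2_add[of y x y0 a]
      by (simp add: Cons_mem_solutions_iff add_eq_0_iff_eq)
    moreover have "y \<in> ?F \<longleftrightarrow> (\<forall>a\<in>A. bform a x y = bform a [w] [z])"
      using y by (simp add: Cons_mem_solutions_iff)
    moreover have "map2 (+) y y0 \<in> solutions A x \<longleftrightarrow> (\<forall>a\<in>A. bform a x (map2 (+) y y0) = 0)"
      using y len by (simp add: solutions_def)
    ultimately show ?thesis
      by blast
  qed
  have "?F = (\<lambda>y. map2 (+) y y0) ` solutions A x"
  proof (intro equalityI subsetI)
    fix y assume y: "y \<in> ?F"
    then have "length y = length x"
      by (simp add: Cons_mem_solutions_iff)
    then have "map2 (+) y y0 \<in> solutions A x" "y = map2 (+) (map2 (+) y y0) y0"
      using iff y len map2_add_map2_add[of y y0] by simp_all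
    then show "y \<in> (\<lambda>y. map2 (+) y y0) ` solutions A x"
      by blast
  next
    fix y' assume "y' \<in> (\<lambda>y. map2 (+) y y0) ` solutions A x"
    then obtain y where y: "y \<in> solutions A x" "y' = map2 (+) y y0"
      by blast
    then have "length y = length x"
      by (simp add: solutions_def)
    then show "y' \<in> ?F"
      using iff[of y'] y len map2_add_map2_add[of y y0] by simp
  qed
  moreover have "inj_on (\<lambda>y. map2 (+) y y0) (solutions A x)"
    by (rule inj_on_inverseI[where g = "\<lambda>y. map2 (+) y y0"])
      (simp add: solutions_def len map2_add_map2_add)
  ultimately show ?thesis
    by (simp add: card_image)
qed

lemma card_solutions_Cons:
  "card (solutions A (w # x)) = card {z. \<exists>y. z # y \<in> solutions A (w # x)} * card (solutions A x)"
proof -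
  define F where "F z = {y. z # y \<in> solutions A (w # x)}" for z
  have "solutions A (w # x) = (\<lambda>(z, y). z # y) ` (SIGMA z:UNIV. F z)"
  proof (intro equalityI subsetI)
    fix ys assume ys: "ys \<in> solutions A (w # x)"
    then obtain z y where "ys = z # y"
      by (cases ys) (auto simp: solutions_def)
    then show "ys \<in> (\<lambda>(z, y). z # y) ` (SIGMA z:UNIV. F z)"
      using ys by (auto simp: F_def)
  qed (auto simp: F_def)
  moreover have "inj_on (\<lambda>(z, y). z # y) (SIGMA z:UNIV. F z)"
    by (auto simp: inj_on_def)
  moreover have "finite (F z)" for z
    by (rule finite_subset[OF _ finite_lists_length_eq_UNIV[of "length x"]])
      (auto simp: F_def Cons_mem_solutions_iff)
  ultimately have "card (solutions A (w # x)) = (\<Sum>z\<in>UNIV. card (F z))"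
    by (simp add: card_image)
  also have "\<dots> = (\<Sum>z\<in>{z. F z \<noteq> {}}. card (solutions A x))"
    using card_solutions_fibre unfolding F_def by (intro sum.mono_neutral_cong_right) auto
  finally show ?thesis
    by (simp add: F_def)
qed

lemma first_coords_if_mem_span:
  assumes "w \<in> span_list K x"
  shows "{z. \<exists>y. z # y \<in> solutions A (w # x)} = UNIV"
proof -
  have "\<exists>y. z # y \<in> solutions A (w # x)" for z
  proof -
    obtain y where "length y = length x" "\<forall>a. bform a x y = bform a [w] [z]"
      using ex_bform_eq_of_mem_span[OF assms] by blast
    then show ?thesis
      by (auto simp only: Cons_mem_solutions_iff)
  qed
  then show ?thesis
    by blast
qed

lemma first_coords_if_not_mem_span:
  assumes "w \<notin> span_list K x" and "2 * length (w # x) \<le> W"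
  shows "{z. \<exists>y. z # y \<in> solutions {a0..<a0 + int W} (w # x)} = span_list K (w # x)"
proof (intro equalityI subsetI)
  fix z assume "z \<in> {z. \<exists>y. z # y \<in> solutions {a0..<a0 + int W} (w # x)}"
  then obtain y where "z # y \<in> solutions {a0..<a0 + int W} (w # x)"
    by blast
  then show "z \<in> span_list K (w # x)"
    using assms by (intro first_coord_mem_span[of w x y W a0]) (auto simp: solutions_def)
next
  fix z assume "z \<in> span_list K (w # x)"
  then obtain c v where z: "z = c * w + v" "c \<in> K" "v \<in> span_list K x"
    by auto
  obtain y where y: "length y = length x" "\<forall>a. bform a x y = bform a [v] [w]"
    using ex_bform_eq_of_mem_span[OF z(3)] by blast
  have "bform a x y = bform a [w] [z]" for a
  proof -
    have "bform a [w] [z] = c * (w * \<sigma> a w + \<sigma> a w * w) + bform a [v] [w]"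
      using z(2) unfolding z(1) by (simp add: \<sigma>_add \<sigma>_mult \<sigma>_fixes_K algebra_simps)
    also have "w * \<sigma> a w + \<sigma> a w * w = 0"
      by (simp add: mult.commute add_self)
    finally show ?thesis
      using y(2) by simp
  qed
  then show "z \<in> {z. \<exists>y. z # y \<in> solutions {a0..<a0 + int W} (w # x)}"
    using y(1) by (auto simp only: Cons_mem_solutions_iff)
qed

theorem card_solutions:
  assumes "2 * length x \<le> W"
  shows "card (solutions {a0..<a0 + int W} x) =
    card (UNIV :: 'a set) ^ (length x - rank_list K x) * card K ^ (rank_list K x * (rank_list K x + 1) div 2)"
  using assms
proof (induction x)
  case Nil
  have "solutions A [] = {[]}" for A
    by (auto simp: solutions_def)
  then show ?case
    by simp
next
  case (Cons w x)
  let ?Q = "card (UNIV :: 'a set)" and ?q = "card K" and ?r = "rank_list K x"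
  have IH: "card (solutions {a0..<a0 + int W} x) = ?Q ^ (length x - ?r) * ?q ^ (?r * (?r + 1) div 2)"
    using Cons by simp
  have "?r \<le> length x"
    by (rule rank_list_le_length)
  show ?case
  proof (cases "w \<in> span_list K x")
    case True
    then have "card (solutions {a0..<a0 + int W} (w # x)) = ?Q * card (solutions {a0..<a0 + int W} x)"
      by (simp add: card_solutions_Cons first_coords_if_mem_span)
    then show ?thesis
      using IH True \<open>?r \<le> length x\<close> by (simp add: Suc_diff_le)
  next
    case False
    have "card (span_list K (w # x)) = ?q ^ Suc ?r"
      using card_span_list[OF is_subfield_K finite, of "w # x"] False by (simp del: span_list.simps)
    then have "card (solutions {a0..<a0 + int W} (w # x)) = ?q ^ Suc ?r * card (solutions {a0..<a0 + int W} x)"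
      using False Cons.prems by (simp add: card_solutions_Cons first_coords_if_not_mem_span)
    moreover have "Suc ?r * (Suc ?r + 1) div 2 = ?r * (?r + 1) div 2 + Suc ?r"
      by simp
    ultimately show ?thesis
      using IH False by (simp add: power_add)
  qed
qed


lemma bform_conv_sum:
  assumes "length x = i" "length y = i"
  shows "bform a x y = (\<Sum>l<i. x ! l * \<sigma> a (y ! l) + \<sigma> a (x ! l) * y ! l)"
  unfolding bform_def using assms by (simp add: sum_list_sum_nth atLeast0LessThan)

lemma bform_uminus: "bform (- a) x y = \<sigma> (- a) (bform a x y)"
proof (induction x arbitrary: y)
  case (Cons u x)
  then show ?case
    by (cases y) (simp_all add: \<sigma>_add \<sigma>_mult \<sigma>_\<sigma> algebra_simps)
qed simp

lemma bform_cong: "(a * int d) mod int m = (a' * int d) mod int m \<Longrightarrow> bform a x y = bform a' x y"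
  unfolding bform_def \<sigma>_def by (simp add: frob_cong[of "a * int d" m "a' * int d"])

text \<open>Since \<open>\<sigma> (2 k) = id\<close>, the form at \<open>k + j\<close> is a conjugate of the one at \<open>k - j\<close>: the
  \<open>s + 1\<close> defining equations say that the form vanishes on a window of \<open>2 s + 1\<close> exponents.\<close>
lemma bform_vanish_window_iff:
  assumes "(2 * int k * int d) mod int m = 0"
  shows "(\<forall>j\<in>{0..s}. bform (int k - int j) x y = 0) \<longleftrightarrow>
    (\<forall>a\<in>{int k - int s..<int k - int s + int (2 * s + 1)}. bform a x y = 0)"
proof
  assume vanish: "\<forall>j\<in>{0..s}. bform (int k - int j) x y = 0"
  show "\<forall>a\<in>{int k - int s..<int k - int s + int (2 * s + 1)}. bform a x y = 0"
  proof
    fix a assume a: "a \<in> {int k - int s..<int k - int s + int (2 * s + 1)}"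
    show "bform a x y = 0"
    proof (cases "a \<le> int k")
      case True
      define j where "j = nat (int k - a)"
      have "j \<in> {0..s}" "a = int k - int j"
        using a True by (auto simp: j_def)
      then show ?thesis
        using vanish by auto
    next
      case False
      define j where "j = nat (a - int k)"
      have j: "j \<in> {0..s}" "a = int k + int j"
        using a False by (auto simp: j_def)
      have "(a * int d) mod int m = (- (int k - int j) * int d + 2 * int k * int d) mod int m"
        by (rule arg_cong[where f = "\<lambda>t. t mod int m"]) (simp add: j(2) algebra_simps)
      also have "\<dots> = (- (int k - int j) * int d + (2 * int k * int d) mod int m) mod int m"
        by (rule mod_add_right_eq[symmetric])
      also have "\<dots> = (- (int k - int j) * int d) mod int m"
        using assms by simp
      finally have "bform a x y = bform (- (int k - int j)) x y"
        by (rule bform_cong)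
      also have "\<dots> = 0"
        using vanish j(1) bform_uminus[of "int k - int j" x y] by simp
      finally show ?thesis .
    qed
  qed
qed auto


lemma card_solution_pairs:
  assumes "2 * L \<le> W"
  shows "real (card (SIGMA x:{x. length x = L}. solutions {a0..<a0 + int W} x)) =
    (\<Sum>u = 0..L. gauss_binom (real (card K)) L u
       * (\<Prod>j<u. real (card (UNIV :: 'a set)) - real (card K) ^ j)
       * real (card (UNIV :: 'a set)) ^ (L - u) * real (card K) ^ (u * (u + 1) div 2))"
proof -
  let ?S = "{x :: 'a list. length x = L}" and ?Q = "card (UNIV :: 'a set)" and ?q = "card K"
  let ?f = "\<lambda>u. ?Q ^ (L - u) * ?q ^ (u * (u + 1) div 2)"
  have "card (SIGMA x:?S. solutions {a0..<a0 + int W} x) = (\<Sum>x\<in>?S. card (solutions {a0..<a0 + int W} x))"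
    by (rule card_SigmaI) (simp_all add: finite_lists_length_eq_UNIV finite_solutions)
  also have "\<dots> = (\<Sum>x\<in>?S. ?f (rank_list K x))"
    using assms by (intro sum.cong refl) (simp add: card_solutions)
  also have "\<dots> = (\<Sum>u\<in>{0..L}. \<Sum>x\<in>{x \<in> ?S. rank_list K x = u}. ?f (rank_list K x))"
    by (rule sum.group[symmetric])
      (use finite_lists_length_eq_UNIV rank_list_le_length in auto)
  also have "\<dots> = (\<Sum>u\<in>{0..L}. card {x :: 'a list. length x = L \<and> rank_list K x = u} * ?f u)"
    by (intro sum.cong refl) simp
  finally show ?thesis
    by (simp add: card_lists_rank[OF is_subfield_K] mult.assoc)
qed

text \<open>A tuple \<open>(x\<^sub>1, \<dots>, x\<^sub>2\<^sub>i)\<close> of \<open>V_set\<close> is \<open>splice x y\<close>: \<open>x\<close> collects the odd-indexed and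
  \<open>y\<close> the even-indexed entries.\<close>
lemma splice_mem_V_set_iff:
  assumes "length x = i" "length y = i"
  shows "splice x y \<in> (V_set m n d e s i :: 'a list set) \<longleftrightarrow>
    (\<forall>j\<in>{0..s}. bform (int (n div e) - int j) x y = 0)"
proof -
  have "(\<Sum>l\<in>{1..i}. splice x y ! (2 * l - 2) * frob m (a * int d) (splice x y ! (2 * l - 1))
        + frob m (a * int d) (splice x y ! (2 * l - 2)) * splice x y ! (2 * l - 1))
      = bform a x y" for a
    using assms nth_splice[of x y]
    by (simp add: sum.atLeast1_atMost_eq bform_conv_sum \<sigma>_def)
  then show ?thesis
    using assms by (simp add: V_set_def)
qed

lemma mod_2_mult_n_div_e_eq_0:
  assumes "m = 2 * n" "e dvd n"
  shows "(2 * int (n div e) * int d) mod int m = 0"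
proof -
  have "2 * (n div e) * d = m * (d div e)"
    using assms e_dvd_d by (metis div_mult_swap mult.assoc mult.commute)
  then show ?thesis
    by (metis mod_mult_self1_is_0 of_nat_mult of_nat_numeral)
qed

lemma splice_mem_V_set_iff_solutions:
  assumes "m = 2 * n" "e dvd n" "length x = i" "length y = i"
  shows "splice x y \<in> (V_set m n d e s i :: 'a list set) \<longleftrightarrow>
    y \<in> solutions {int (n div e) - int s..<int (n div e) - int s + int (2 * s + 1)} x"
  using splice_mem_V_set_iff[OF assms(3,4)]
    bform_vanish_window_iff[OF mod_2_mult_n_div_e_eq_0[OF assms(1,2)]] assms(3,4)
  by (simp add: solutions_def)

lemma V_set_eq_image_splice:
  fixes n s i :: nat
  assumes "m = 2 * n" "e dvd n"
  defines "W \<equiv> {int (n div e) - int s..<int (n div e) - int s + int (2 * s + 1)}"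
  shows "V_set m n d e s i = (\<lambda>(x, y). splice x y) ` (SIGMA x:{x. length x = i}. solutions W x)"
proof (intro equalityI subsetI)
  fix xs :: "'a list" assume xs: "xs \<in> V_set m n d e s i"
  define x where "x = map (\<lambda>l. xs ! (2 * l)) [0..<i]"
  define y where "y = map (\<lambda>l. xs ! (2 * l + 1)) [0..<i]"
  have "length xs = 2 * i"
    using xs by (simp add: V_set_def)
  then have "splice x y = xs"
    unfolding x_def y_def by (rule splice_evens_odds)
  moreover have "length x = i" "length y = i"
    by (simp_all add: x_def y_def)
  ultimately have "y \<in> solutions W x"
    using xs splice_mem_V_set_iff_solutions[OF assms(1,2)] unfolding W_def by blast
  with \<open>splice x y = xs\<close> \<open>length x = i\<close>
  show "xs \<in> (\<lambda>(x, y). splice x y) ` (SIGMA x:{x. length x = i}. solutions W x)"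
    by force
next
  fix xs assume "xs \<in> (\<lambda>(x, y). splice x y) ` (SIGMA x:{x. length x = i}. solutions W x)"
  then obtain x y where "xs = splice x y" "length x = i" "y \<in> solutions W x"
    by auto
  then show "xs \<in> V_set m n d e s i"
    using splice_mem_V_set_iff_solutions[OF assms(1,2)] unfolding W_def by (auto simp: solutions_def)
qed

lemma card_V_set:
  fixes n s i :: nat
  assumes "m = 2 * n" "e dvd n"
  defines "W \<equiv> {int (n div e) - int s..<int (n div e) - int s + int (2 * s + 1)}"
  shows "card (V_set m n d e s i :: 'a list set) = card (SIGMA x:{x. length x = i}. solutions W x)"
proof -
  have "inj_on (\<lambda>(x, y). splice x y) (SIGMA x:{x. length x = i}. solutions W x)"
    by (rule inj_on_subset[OF inj_on_splice]) (auto simp: solutions_def)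
  then show ?thesis
    unfolding V_set_eq_image_splice[OF assms(1,2)] W_def by (rule card_image)
qed

theorem card_V_set_eq_sum:
  fixes n s i :: nat
  assumes "m = 2 * n" "e dvd n" "i \<le> s"
  shows "real (card (V_set m n d e s i :: 'a list set)) =
    (\<Sum>u = 0..i. gauss_binom (real (card K)) i u * (\<Prod>j<u. 2 ^ m - real (card K) ^ j)
       * (2 ^ m) ^ (i - u) * real (card K) ^ (u * (u + 1) div 2))"
proof -
  let ?a0 = "int (n div e) - int s"
  have "real (card (V_set m n d e s i :: 'a list set))
      = real (card (SIGMA x:{x. length x = i}. solutions {?a0..<?a0 + int (2 * s + 1)} x))"
    using card_V_set[OF assms(1,2)] by simp
  also have "\<dots> = (\<Sum>u = 0..i. gauss_binom (real (card K)) i u * (\<Prod>j<u. 2 ^ m - real (card K) ^ j)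
       * (2 ^ m) ^ (i - u) * real (card K) ^ (u * (u + 1) div 2))"
    using assms(3) card_UNIV by (subst card_solution_pairs) simp_all
  finally show ?thesis .
qed

end

lemma sum_count_normal_form:
  fixes m e i :: nat
  shows "(\<Sum>u = 0..i. gauss_binom (2 ^ e) i u * (\<Prod>j<u. (2 :: real) ^ m - (2 ^ e) ^ j)
       * (2 ^ m) ^ (i - u) * (2 ^ e) ^ (u * (u + 1) div 2)) =
    2 ^ (m * i) * (\<Sum>u = 0..i. gauss_binom (2 ^ e) i u * 2 ^ (e * u * (u + 1) div 2)
        * (\<Prod>j = 0..<u. 1 - 2 powr (real (e * j) - real m)))"
  unfolding sum_distrib_left
proof (rule sum.cong[OF refl])
  fix u assume "u \<in> {0..i}"
  have "(\<Prod>j = 0..<u. 1 - 2 powr (real (e * j) - real m)) * (2 :: real) ^ (m * u)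
      = (\<Prod>j<u. (1 - 2 powr (real (e * j) - real m)) * 2 ^ m)"
    by (simp add: atLeast0LessThan prod.distrib power_mult)
  also have "\<dots> = (\<Prod>j<u. (2 :: real) ^ m - (2 ^ e) ^ j)"
  proof (rule prod.cong[OF refl])
    fix j
    have "2 powr (real (e * j) - real m) = (2 :: real) ^ (e * j) / 2 ^ m"
      by (simp only: powr_diff powr_realpow[of 2 "e * j", symmetric] powr_realpow[of 2 m, symmetric])
    then show "(1 - 2 powr (real (e * j) - real m)) * 2 ^ m = (2 :: real) ^ m - (2 ^ e) ^ j"
      by (simp add: field_simps power_mult)
  qed
  finally have prod: "(\<Prod>j<u. (2 :: real) ^ m - (2 ^ e) ^ j)
      = (\<Prod>j = 0..<u. 1 - 2 powr (real (e * j) - real m)) * 2 ^ (m * u)" ..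
  have "e * u * (u + 1) div 2 = e * (u * (u + 1) div 2)"
    by (metis div_mult_swap even_mult_iff even_Suc Suc_eq_plus1 mult.assoc)
  then have "(2 :: real) ^ (e * u * (u + 1) div 2) = (2 ^ e) ^ (u * (u + 1) div 2)"
    by (simp add: power_mult)
  moreover have "(2 :: real) ^ (m * i) = (2 ^ m) ^ (i - u) * 2 ^ (m * u)"
    using \<open>u \<in> {0..i}\<close> by (simp flip: power_mult power_add add: algebra_simps)
  ultimately show "gauss_binom (2 ^ e) i u * (\<Prod>j<u. (2 :: real) ^ m - (2 ^ e) ^ j)
      * (2 ^ m) ^ (i - u) * (2 ^ e) ^ (u * (u + 1) div 2)
    = 2 ^ (m * i) * (gauss_binom (2 ^ e) i u * 2 ^ (e * u * (u + 1) div 2)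
      * (\<Prod>j = 0..<u. 1 - 2 powr (real (e * j) - real m)))"
    unfolding prod by (simp add: algebra_simps)
qed

theorem theorem6p4:
  fixes m n d e s i :: nat
    and V :: "'a::{field,finite} list set"
  defines "V \<equiv> V_set m n d e s i"
  assumes "card (UNIV :: 'a set) = 2 ^ m"
    and "m > 0" "n > 0" "d > 0" "e > 0"
    and "m = 2 * n" "e = gcd n d" "e = gcd m d"
    and "1 \<le> i" "i \<le> s"
  shows "real (card V) =
    2 ^ (m * i) * (\<Sum>u = 0..i. gauss_binom (2 ^ e) i u * 2 ^ (e * u * (u + 1) div 2)
        * (\<Prod>j = 0..<u. (1 - 2 powr (real (e * j) - real m))))"
proof -
  interpret frob_forms m d e "fixed_field e :: 'a set"
    using assms(2,3,9) by unfold_locales simp_all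
  have "card (fixed_field e :: 'a set) = 2 ^ e"
    using assms(2,3,6) CHAR_2 e_dvd_m by (intro card_fixed_field) simp_all
  then have "real (card V) = (\<Sum>u = 0..i. gauss_binom (2 ^ e) i u * (\<Prod>j<u. (2 :: real) ^ m - (2 ^ e) ^ j)
      * (2 ^ m) ^ (i - u) * (2 ^ e) ^ (u * (u + 1) div 2))"
    unfolding V_def using card_V_set_eq_sum[OF assms(7) _ assms(11)] assms(8) by simp
  then show ?thesis
    unfolding sum_count_normal_form .
qed

end
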